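(* Let $G$ be an abelian group and $\phi\in\mathcal{P}^{\mathbb{H}}_*(G)$. If $\mu$ is the unique nonnegative Radon measure on $G^\delta$ with $\phi(g)=\int_{G^\delta}\gamma(g)\,d\mu(\gamma)$ for all $g\in G$, then the restrictions of $\mu^{\hat *}$ and $\mu$ to $G^\delta\setminus G^\delta_{\mathbb{R}}$ are mutually singular.
   Context: $\mathbb{H}$ is the real quaternion algebra, $\mathbb{S}=\{q\in\mathbb{H}:|q|=1\}$. For an abelian group $G$, $\phi:G\to\mathbb{H}$ is positive definite if for all $k$, $g_i\in G$, $q_i\in\mathbb{H}$, $\sum_{i,j=1}^k\overline{q_i}\,\phi(g_j-g_i)\,q_j$ is a nonnegative real number; $\mathcal{P}^{\mathbb{H}}_*(G)$ is the set of such $\phi$ with $\phi(0)=1$. $G^\delta=\mathrm{Hom}(G,\mathbb{S})$ with the topology of pointwise convergence; $G^\delta_{\mathbb{R}}\subseteq G^\delta$ is the subset of real-valued homomorphisms (i.e. with values in $\{\pm1\}$). The involution on $G^\delta$ is $\gamma\mapsto\gamma^*:=\overline{\gamma}$ (pointwise quaternionic conjugation), a homeomorphism of $G^\delta$; for a Radon measure $\mu$ on $G^\delta$, $\mu^{\hat*}$ is the push-forward, $\mu^{\hat*}(\Omega)=\mu(\Omega^* )$ for Borel $\Omega\subseteq G^\delta$, where $\Omega^*=\{\gamma^*:\gamma\in\Omega\}$. *)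

theory Defs
  imports "HOL-Analysis.Analysis"
begin

text \<open>A quaternion a + b j (a, b complex, j z = cnj z j) is the pair (a, b).
  Addition, real scaling and the norm of the product type complex \<times> complex
  coincide with those of the quaternions.\<close>

type_synonym quat = "complex \<times> complex"

definition qmul :: "quat \<Rightarrow> quat \<Rightarrow> quat" where
  "qmul p q = (fst p * fst q - snd p * cnj (snd q), fst p * snd q + snd p * cnj (fst q))"

definition qcnj :: "quat \<Rightarrow> quat" where
  "qcnj q = (cnj (fst q), - snd q)"

definition qone :: quat where
  "qone = (1, 0)"

definition qreal :: "real \<Rightarrow> quat" where
  "qreal r = (complex_of_real r, 0)"

definition pos_def_quat :: "('g::ab_group_add \<Rightarrow> quat) \<Rightarrow> bool" where
  "pos_def_quat \<phi> \<longleftrightarrow>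
     (\<forall>(k::nat) (g::nat \<Rightarrow> 'g) (q::nat \<Rightarrow> quat).
        \<exists>r\<ge>0. (\<Sum>i<k. \<Sum>j<k. qmul (qmul (qcnj (q i)) (\<phi> (g j - g i))) (q j)) = qreal r)"

definition P_star :: "('g::ab_group_add \<Rightarrow> quat) set" where
  "P_star = {\<phi>. pos_def_quat \<phi> \<and> \<phi> 0 = qone}"

text \<open>Topology of pointwise convergence = product topology on 'g \<Rightarrow> quat.\<close>

definition dual_hom :: "('g::ab_group_add \<Rightarrow> quat) set" where
  "dual_hom = {\<gamma>. (\<forall>g h. \<gamma> (g + h) = qmul (\<gamma> g) (\<gamma> h)) \<and> (\<forall>g. norm (\<gamma> g) = 1)}"

definition dual_hom_real :: "('g::ab_group_add \<Rightarrow> quat) set" where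
  "dual_hom_real = {\<gamma> \<in> dual_hom. \<forall>g. \<gamma> g \<in> range qreal}"

definition dual_star :: "('g \<Rightarrow> quat) \<Rightarrow> ('g \<Rightarrow> quat)" where
  "dual_star \<gamma> = (\<lambda>g. qcnj (\<gamma> g))"

definition radon_on :: "'a::topological_space set \<Rightarrow> 'a measure \<Rightarrow> bool" where
  "radon_on S \<mu> \<longleftrightarrow>
     space \<mu> = S \<and> sets \<mu> = sets (restrict_space borel S) \<and> finite_measure \<mu> \<and>
     (\<forall>A\<in>sets \<mu>. emeasure \<mu> A = (SUP K \<in> {K. compact K \<and> K \<subseteq> A}. emeasure \<mu> K))"

definition star_measure :: "('g \<Rightarrow> quat) measure \<Rightarrow> ('g \<Rightarrow> quat) measure" where
  "star_measure \<mu> = distr \<mu> \<mu> dual_star"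

definition restrict_measure :: "'a measure \<Rightarrow> 'a set \<Rightarrow> 'a measure" where
  "restrict_measure \<mu> N = density \<mu> (indicator N)"

definition mutually_singular :: "'a measure \<Rightarrow> 'a measure \<Rightarrow> bool" where
  "mutually_singular M N \<longleftrightarrow>
     (\<exists>A \<in> sets M. A \<in> sets N \<and> emeasure M A = 0 \<and> emeasure N (space N - A) = 0)"

end

theory Submission
  imports Defs
begin

text \<open>Put \<open>\<tau> = \<mu> + \<mu>\<^sup>*\<close> and write \<open>\<mu> = f \<tau>\<close>; since \<open>\<tau>\<close> is \<open>*\<close>-invariant,
  \<open>\<mu>\<^sup>* = (f \<circ> *) \<tau>\<close>, so on the non-real characters the common part of \<open>\<mu>\<close> and \<open>\<mu>\<^sup>*\<close>
  has density \<open>min f (f \<circ> *)\<close>. Suppose it is not null. By inner regularity and compactness it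
  charges a set \<open>{\<gamma>. \<gamma> g \<in> P}\<close>, where \<open>P\<close> is a Borel set of non-real quaternions that is
  closed under conjugation and moved off itself by a rotation \<open>q \<mapsto> u q u\<^sup>*\<close>. Rotating this
  \<open>*\<close>-symmetric piece \<open>w \<tau>\<close> of \<open>\<mu>\<close> by \<open>u\<close> yields a different Radon measure with the same
  moments, because \<open>\<integral> w(\<gamma>) \<gamma>(g) d\<tau>\<close> is real and hence fixed by the rotation; this
  contradicts uniqueness. So \<open>min f (f \<circ> *) = 0\<close> almost everywhere on the non-real characters,
  and the set \<open>{f > 0}\<close> separates the two restricted measures.\<close>

lemma qmul_assoc: "qmul (qmul a b) c = qmul a (qmul b c)"
  by (simp add: qmul_def prod_eq_iff complex_eq_iff algebra_simps)

lemma qcnj_qmul: "qcnj (qmul p q) = qmul (qcnj q) (qcnj p)"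
  by (simp add: qmul_def qcnj_def prod_eq_iff complex_eq_iff algebra_simps)

lemma qcnj_qcnj [simp]: "qcnj (qcnj q) = q"
  by (simp add: qcnj_def)

lemma qmul_qone [simp]: "qmul q qone = q" "qmul qone q = q"
  by (simp_all add: qmul_def qone_def)

lemma norm_qcnj [simp]: "norm (qcnj q) = norm q"
  by (simp add: qcnj_def norm_prod_def)

lemma qmul_add_left: "qmul (a + b) c = qmul a c + qmul b c"
  and qmul_add_right: "qmul c (a + b) = qmul c a + qmul c b"
  and qmul_scaleR_left: "qmul (r *\<^sub>R a) c = r *\<^sub>R qmul a c"
  and qmul_scaleR_right: "qmul c (r *\<^sub>R a) = r *\<^sub>R qmul c a"
  by (simp_all add: qmul_def algebra_simps scaleR_conv_of_real)

lemma norm_quat_squared: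
  "(norm (q::quat))\<^sup>2 = (Re (fst q))\<^sup>2 + (Im (fst q))\<^sup>2 + (Re (snd q))\<^sup>2 + (Im (snd q))\<^sup>2"
  by (simp add: norm_prod_def cmod_def)

lemma norm_qmul: "norm (qmul p q) = norm p * norm q"
proof -
  have "(norm (qmul p q))\<^sup>2 = (norm p * norm q)\<^sup>2"
    unfolding power_mult_distrib norm_quat_squared
    by (simp add: qmul_def power2_eq_square algebra_simps)
  then show ?thesis by (simp add: power2_eq_iff_nonneg)
qed

lemma qmul_qcnj_unit:
  assumes "norm u = 1"
  shows "qmul u (qcnj u) = qone" "qmul (qcnj u) u = qone"
proof -
  have "(Re (fst u))\<^sup>2 + (Im (fst u))\<^sup>2 + (Re (snd u))\<^sup>2 + (Im (snd u))\<^sup>2 = 1"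
    using assms by (simp flip: norm_quat_squared)
  then show "qmul u (qcnj u) = qone" "qmul (qcnj u) u = qone"
    by (simp_all add: qmul_def qcnj_def qone_def prod_eq_iff complex_eq_iff power2_eq_square algebra_simps)
qed

lemma bounded_linear_qcnj: "bounded_linear qcnj"
  by (rule bounded_linear_intro[where K=1]) (auto simp: qcnj_def scaleR_conv_of_real norm_prod_def)

lemma range_qreal: "range qreal = {q. snd q = 0 \<and> Im (fst q) = 0}"
proof (intro set_eqI iffI)
  fix q :: quat
  assume "q \<in> {q. snd q = 0 \<and> Im (fst q) = 0}"
  then have "q = qreal (Re (fst q))" by (simp add: qreal_def prod_eq_iff complex_eq_iff)
  then show "q \<in> range qreal" by blast
qed (auto simp: qreal_def)

lemma qcnj_eq_iff_real: "qcnj q = q \<longleftrightarrow> q \<in> range qreal"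
  by (auto simp: range_qreal qcnj_def prod_eq_iff complex_eq_iff)

lemma open_nonreal: "open {q::quat. q \<notin> range qreal}"
proof -
  have "{q::quat. q \<notin> range qreal} = {q. qcnj q \<noteq> q}" by (simp add: qcnj_eq_iff_real)
  also have "open \<dots>"
    by (intro open_Collect_neq bounded_linear.continuous_on[OF bounded_linear_qcnj] continuous_intros)
  finally show ?thesis .
qed

definition qrot :: "quat \<Rightarrow> quat \<Rightarrow> quat" where
  "qrot u q = qmul (qmul u q) (qcnj u)"

lemma bounded_linear_qrot: "bounded_linear (qrot u)"
  by (rule bounded_linear_intro[where K="norm u * norm u"])
     (auto simp: qrot_def qmul_add_left qmul_add_right qmul_scaleR_left qmul_scaleR_right norm_qmul)

lemma borel_measurable_qrot [measurable]:
  "g \<in> borel_measurable M \<Longrightarrow> (\<lambda>x. qrot u (g x)) \<in> borel_measurable M"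
  by (rule borel_measurable_continuous_on[OF bounded_linear.continuous_on[OF bounded_linear_qrot continuous_on_id]])

lemma qrot_qmul: "norm u = 1 \<Longrightarrow> qrot u (qmul p q) = qmul (qrot u p) (qrot u q)"
  by (simp add: qrot_def qmul_assoc flip: qmul_assoc[of "qcnj u" u] add: qmul_qcnj_unit)

lemma norm_qrot: "norm u = 1 \<Longrightarrow> norm (qrot u q) = norm q"
  by (simp add: qrot_def norm_qmul)

lemma qreal_eq_scaleR: "qreal r = r *\<^sub>R qone"
  by (simp add: qreal_def qone_def scaleR_conv_of_real)

lemma qrot_real: "norm u = 1 \<Longrightarrow> q \<in> range qreal \<Longrightarrow> qrot u q = q"
  by (auto simp: qrot_def qreal_eq_scaleR qmul_scaleR_left qmul_scaleR_right qmul_qcnj_unit)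

text \<open>A non-real quaternion \<open>a + b j\<close> lies in one of three Borel pieces, according to the
  position of \<open>b\<close> in the complex plane; each piece is closed under conjugation and is moved off
  itself by a rotation.\<close>

definition quadrant13 :: "quat set" where
  "quadrant13 = {p. Re (snd p) \<noteq> 0 \<and> 0 \<le> Re (snd p) * Im (snd p)}"

definition quadrant24 :: "quat set" where
  "quadrant24 = {p. snd p \<noteq> 0 \<and> (Re (snd p) = 0 \<or> Re (snd p) * Im (snd p) < 0)}"

definition complex_nonreal :: "quat set" where
  "complex_nonreal = {p. snd p = 0 \<and> Im (fst p) \<noteq> 0}"

definition quarter_turn :: quat where
  "quarter_turn = (cis (pi / 4), 0)"

definition tilt :: quat where
  "tilt = (complex_of_real (1 / sqrt 2), complex_of_real (1 / sqrt 2))"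

lemma nonreal_cases:
  "q \<notin> range qreal \<Longrightarrow> q \<in> quadrant13 \<or> q \<in> quadrant24 \<or> q \<in> complex_nonreal"
  by (auto simp: range_qreal quadrant13_def quadrant24_def complex_nonreal_def complex_eq_iff)

lemma qcnj_mem_pieces:
  "qcnj q \<in> quadrant13 \<longleftrightarrow> q \<in> quadrant13"
  "qcnj q \<in> quadrant24 \<longleftrightarrow> q \<in> quadrant24"
  "qcnj q \<in> complex_nonreal \<longleftrightarrow> q \<in> complex_nonreal"
  by (auto simp: quadrant13_def quadrant24_def complex_nonreal_def qcnj_def)

lemma quadrant13_borel [measurable]: "quadrant13 \<in> sets borel"
proof -
  have "quadrant13 = {q. Re (snd q) \<noteq> 0} \<inter> {q. 0 \<le> Re (snd q) * Im (snd q)}"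
    by (auto simp: quadrant13_def)
  also have "\<dots> \<in> sets borel"
    by (intro sets.Int borel_open borel_closed open_Collect_neq closed_Collect_le continuous_intros)
  finally show ?thesis .
qed

lemma quadrant24_borel [measurable]: "quadrant24 \<in> sets borel"
proof -
  have "quadrant24 = {q. snd q \<noteq> 0} \<inter> ({q. Re (snd q) = 0} \<union> {q. Re (snd q) * Im (snd q) < 0})"
    by (auto simp: quadrant24_def)
  also have "\<dots> \<in> sets borel"
    by (intro sets.Int sets.Un borel_open borel_closed open_Collect_neq closed_Collect_eq
        open_Collect_less continuous_intros)
  finally show ?thesis .
qed

lemma complex_nonreal_borel [measurable]: "complex_nonreal \<in> sets borel"
proof -
  have "complex_nonreal = {q. snd q = 0} \<inter> {q. Im (fst q) \<noteq> 0}"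
    by (auto simp: complex_nonreal_def)
  also have "\<dots> \<in> sets borel"
    by (intro sets.Int borel_open borel_closed open_Collect_neq closed_Collect_eq continuous_intros)
  finally show ?thesis .
qed

lemma norm_quarter_turn: "norm quarter_turn = 1"
  by (simp add: quarter_turn_def norm_prod_def)

lemma norm_tilt: "norm tilt = 1"
proof -
  have "(1 / sqrt 2)\<^sup>2 + (1 / sqrt 2)\<^sup>2 = (1::real)" by (simp add: power_divide)
  then show ?thesis unfolding tilt_def norm_prod_def fst_conv snd_conv norm_of_real by simp
qed

lemma qrot_quarter_turn: "qrot quarter_turn p = (fst p, \<i> * snd p)"
proof -
  have "cis (pi/4) * cnj (cis (pi/4)) = 1" "cis (pi/4) * cis (pi/4) = \<i>"
    by (simp_all add: cis_cnj cis_mult)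
  then show ?thesis
    by (simp add: qrot_def quarter_turn_def qmul_def qcnj_def algebra_simps)
qed

lemma quadrant13_displaced: "p \<in> quadrant13 \<Longrightarrow> qrot quarter_turn p \<notin> quadrant13"
  by (auto simp: quadrant13_def qrot_quarter_turn mult.commute)

lemma quadrant24_displaced: "p \<in> quadrant24 \<Longrightarrow> qrot quarter_turn p \<notin> quadrant24"
  by (auto simp: quadrant24_def qrot_quarter_turn complex_eq_iff mult.commute)

lemma complex_nonreal_displaced: "p \<in> complex_nonreal \<Longrightarrow> qrot tilt p \<notin> complex_nonreal"
proof -
  assume "p \<in> complex_nonreal"
  then have "snd p = 0" "Im (fst p) \<noteq> 0" by (auto simp: complex_nonreal_def)
  moreover have "(1 / sqrt 2) * (1 / sqrt 2) = (1/2::real)" by (simp add: divide_simps)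
  ultimately have "Im (snd (qrot tilt p)) \<noteq> 0"
    by (simp add: qrot_def tilt_def qmul_def qcnj_def algebra_simps)
  then show ?thesis by (auto simp: complex_nonreal_def)
qed

definition dual_rot :: "quat \<Rightarrow> ('g \<Rightarrow> quat) \<Rightarrow> ('g \<Rightarrow> quat)" where
  "dual_rot u \<gamma> = (\<lambda>g. qrot u (\<gamma> g))"

lemma dual_hom_commute:
  assumes "\<gamma> \<in> dual_hom"
  shows "qmul (\<gamma> g) (\<gamma> h) = qmul (\<gamma> h) (\<gamma> (g::'g::ab_group_add))"
proof -
  have "\<forall>g h. \<gamma> (g + h) = qmul (\<gamma> g) (\<gamma> h)" using assms by (simp add: dual_hom_def)
  then show ?thesis by (metis add.commute)
qed

lemma dual_star_dual_hom:
  assumes \<gamma>: "\<gamma> \<in> dual_hom"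
  shows "dual_star \<gamma> \<in> (dual_hom :: ('g::ab_group_add \<Rightarrow> quat) set)"
proof -
  have "qcnj (\<gamma> (a + b)) = qmul (qcnj (\<gamma> a)) (qcnj (\<gamma> b))" for a b
  proof -
    have "\<gamma> (a + b) = qmul (\<gamma> b) (\<gamma> a)"
      using \<gamma> dual_hom_commute[OF \<gamma>, of b a] by (simp add: dual_hom_def)
    then show ?thesis by (simp add: qcnj_qmul)
  qed
  with \<gamma> show ?thesis
    unfolding dual_hom_def dual_star_def by simp
qed

lemma dual_rot_dual_hom: "norm u = 1 \<Longrightarrow> \<gamma> \<in> dual_hom \<Longrightarrow> dual_rot u \<gamma> \<in> dual_hom"
  unfolding dual_hom_def dual_rot_def by (simp add: qrot_qmul norm_qrot)

lemma dual_star_dual_star [simp]: "dual_star (dual_star \<gamma>) = \<gamma>"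
  by (simp add: dual_star_def)

lemma dual_star_nonreal_iff:
  "\<gamma> \<in> dual_hom \<Longrightarrow> dual_star \<gamma> \<in> dual_hom - dual_hom_real \<longleftrightarrow> \<gamma> \<in> dual_hom - dual_hom_real"
proof -
  have "qcnj q \<in> range qreal \<longleftrightarrow> q \<in> range qreal" for q
    by (metis qcnj_eq_iff_real qcnj_qcnj)
  moreover assume "\<gamma> \<in> dual_hom"
  ultimately show ?thesis
    using dual_star_dual_hom[of \<gamma>] by (simp add: dual_hom_real_def dual_star_def del: split_paired_All)
qed

lemma continuous_on_coordinate: "continuous_on A (\<lambda>\<gamma>::'g \<Rightarrow> 'a::topological_space. \<gamma> g)"
  by (rule continuous_on_subset[OF continuous_on_product_coordinates subset_UNIV])

lemma continuous_on_dual_star: "continuous_on A (dual_star :: ('g \<Rightarrow> quat) \<Rightarrow> _)"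
  unfolding dual_star_def
  by (intro continuous_on_coordinatewise_then_product
      bounded_linear.continuous_on[OF bounded_linear_qcnj continuous_on_coordinate])

lemma continuous_on_dual_rot: "continuous_on A (dual_rot u :: ('g \<Rightarrow> quat) \<Rightarrow> _)"
  unfolding dual_rot_def
  by (intro continuous_on_coordinatewise_then_product
      bounded_linear.continuous_on[OF bounded_linear_qrot continuous_on_coordinate])

lemma open_nonreal_coordinate: "open {\<gamma>::'g \<Rightarrow> quat. \<gamma> g \<notin> range qreal}"
proof -
  have "{\<gamma>::'g \<Rightarrow> quat. \<gamma> g \<notin> range qreal} = (\<lambda>\<gamma>. \<gamma> g) -` {q. q \<notin> range qreal}"
    by auto
  also have "open \<dots>"
    by (rule open_vimage[OF open_nonreal continuous_on_product_coordinates])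
  finally show ?thesis .
qed

lemma compact_imp_closed_fun: "compact (K :: ('g \<Rightarrow> 'a::metric_space) set) \<Longrightarrow> closed K"
proof -
  assume "compact K"
  then have "compactin euclidean K" by (simp add: compactin_euclidean_iff)
  moreover have "Hausdorff_space (euclidean :: ('g \<Rightarrow> 'a) topology)"
    using Hausdorff_space_product_topology[of "\<lambda>_. euclidean :: 'a topology" UNIV]
    by (simp add: Hausdorff_space_euclidean euclidean_product_topology)
  ultimately have "closedin euclidean K" using compactin_imp_closedin by blast
  then show ?thesis by (simp only: closed_closedin)
qed

definition add_measure :: "'a measure \<Rightarrow> 'a measure \<Rightarrow> 'a measure" where
  "add_measure M N = measure_of (space M) (sets M) (\<lambda>A. emeasure M A + emeasure N A)"

lemma sets_add_measure [simp, measurable_cong]: "sets (add_measure M N) = sets M"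
  unfolding add_measure_def by (simp add: sets.sets_into_space subset_eq)

lemma space_add_measure [simp]: "space (add_measure M N) = space M"
  unfolding add_measure_def by (simp add: sets.sets_into_space subset_eq)

lemma emeasure_add_measure:
  assumes "sets N = sets M"
  shows "emeasure (add_measure M N) A = emeasure M A + emeasure N A"
proof (cases "A \<in> sets M")
  case True
  have ca: "countably_additive (sets M) (\<lambda>A. emeasure M A + emeasure N A)"
    unfolding countably_additive_def
  proof (intro allI impI)
    fix F :: "nat \<Rightarrow> _" assume F: "range F \<subseteq> sets M" "disjoint_family F" "\<Union> (range F) \<in> sets M"
    have "(\<Sum>i. emeasure M (F i) + emeasure N (F i)) = (\<Sum>i. emeasure M (F i)) + (\<Sum>i. emeasure N (F i))"
      by (rule suminf_add[OF summableI summableI, symmetric])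
    also have "\<dots> = emeasure M (\<Union> (range F)) + emeasure N (\<Union> (range F))"
      using F assms by (simp add: suminf_emeasure)
    finally show "(\<Sum>i. emeasure M (F i) + emeasure N (F i)) = emeasure M (\<Union> (range F)) + emeasure N (\<Union> (range F))" .
  qed
  have pos: "positive (sets M) (\<lambda>A. emeasure M A + emeasure N A)"
    by (simp add: positive_def)
  show ?thesis unfolding add_measure_def
    by (rule emeasure_measure_of_sigma[OF sets.sigma_algebra_axioms pos ca True])
next
  case False
  then show ?thesis using assms
    by (metis add.right_neutral emeasure_notin_sets sets_add_measure)
qed

lemma nn_integral_add_measure:
  assumes sN: "sets N = sets M" and f: "f \<in> borel_measurable M"
  shows "(\<integral>\<^sup>+x. f x \<partial>add_measure M N) = (\<integral>\<^sup>+x. f x \<partial>M) + (\<integral>\<^sup>+x. f x \<partial>N)"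
  using f
proof (induction rule: borel_measurable_induct)
  case (cong f g)
  have "(\<integral>\<^sup>+x. f x \<partial>add_measure M N) = (\<integral>\<^sup>+x. g x \<partial>add_measure M N)"
    by (rule nn_integral_cong) (use cong in simp)
  moreover have "(\<integral>\<^sup>+x. f x \<partial>M) = (\<integral>\<^sup>+x. g x \<partial>M)"
    by (rule nn_integral_cong) (use cong in simp)
  moreover have "(\<integral>\<^sup>+x. f x \<partial>N) = (\<integral>\<^sup>+x. g x \<partial>N)"
    by (rule nn_integral_cong) (use cong sets_eq_imp_space_eq[OF sN] in simp)
  ultimately show ?case using cong by simp
next
  case (set A)
  then show ?case using sN by (simp add: emeasure_add_measure)
next
  case (mult u c)
  have "(\<integral>\<^sup>+x. c * u x \<partial>add_measure M N) = c * (\<integral>\<^sup>+x. u x \<partial>add_measure M N)"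
    using mult by (intro nn_integral_cmult) simp
  also have "\<dots> = c * (\<integral>\<^sup>+x. u x \<partial>M) + c * (\<integral>\<^sup>+x. u x \<partial>N)"
    using mult by (simp add: distrib_left)
  also have "\<dots> = (\<integral>\<^sup>+x. c * u x \<partial>M) + (\<integral>\<^sup>+x. c * u x \<partial>N)"
    using mult sN by (simp add: nn_integral_cmult measurable_cong_sets[OF sN refl])
  finally show ?case .
next
  case (add u v)
  have mN: "u \<in> borel_measurable N" "v \<in> borel_measurable N"
    using add sN by (simp_all add: measurable_cong_sets[OF sN refl])
  have "(\<integral>\<^sup>+x. v x + u x \<partial>add_measure M N) = (\<integral>\<^sup>+x. v x \<partial>add_measure M N) + (\<integral>\<^sup>+x. u x \<partial>add_measure M N)"
    using add by (intro nn_integral_add) simp_all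
  also have "\<dots> = ((\<integral>\<^sup>+x. v x \<partial>M) + (\<integral>\<^sup>+x. u x \<partial>M)) + ((\<integral>\<^sup>+x. v x \<partial>N) + (\<integral>\<^sup>+x. u x \<partial>N))"
    using add by (simp add: ac_simps)
  also have "\<dots> = (\<integral>\<^sup>+x. v x + u x \<partial>M) + (\<integral>\<^sup>+x. v x + u x \<partial>N)"
    using add mN by (simp add: nn_integral_add)
  finally show ?case .
next
  case (seq U)
  have mN: "\<And>i. U i \<in> borel_measurable N"
    using seq sN by (simp_all add: measurable_cong_sets[OF sN refl])
  have "(\<integral>\<^sup>+x. (SUP i. U i) x \<partial>add_measure M N) = (SUP i. \<integral>\<^sup>+x. U i x \<partial>add_measure M N)"
    using seq unfolding SUP_apply by (intro nn_integral_monotone_convergence_SUP) simp_all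
  also have "\<dots> = (SUP i. (\<integral>\<^sup>+x. U i x \<partial>M) + (\<integral>\<^sup>+x. U i x \<partial>N))"
    using seq by simp
  also have "\<dots> = (SUP i. (\<integral>\<^sup>+x. U i x \<partial>M)) + (SUP i. (\<integral>\<^sup>+x. U i x \<partial>N))"
    by (rule ennreal_SUP_add) (auto intro!: incseq_nn_integral seq mN)
  also have "\<dots> = (\<integral>\<^sup>+x. (SUP i. U i) x \<partial>M) + (\<integral>\<^sup>+x. (SUP i. U i) x \<partial>N)"
    using seq mN unfolding SUP_apply by (simp add: nn_integral_monotone_convergence_SUP)
  finally show ?case .
qed

lemma integrable_add_measure_iff:
  fixes f :: "'a \<Rightarrow> 'b::{banach, second_countable_topology}"
  assumes sN: "sets N = sets M"
  shows "integrable (add_measure M N) f \<longleftrightarrow> integrable M f \<and> integrable N f"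
proof -
  have mN: "f \<in> borel_measurable N \<longleftrightarrow> f \<in> borel_measurable M"
    by (simp add: measurable_cong_sets[OF sN refl])
  show ?thesis
  proof (cases "f \<in> borel_measurable M")
    case True
    have "(\<integral>\<^sup>+x. ennreal (norm (f x)) \<partial>add_measure M N) = (\<integral>\<^sup>+x. ennreal (norm (f x)) \<partial>M) + (\<integral>\<^sup>+x. ennreal (norm (f x)) \<partial>N)"
      using True by (intro nn_integral_add_measure sN) measurable
    then show ?thesis using True mN unfolding integrable_iff_bounded by (simp add: top.not_eq_extremum)
  next
    case False
    then show ?thesis using mN by (auto dest: borel_measurable_integrable)
  qed
qed

lemma integral_add_measure:
  fixes f :: "'a \<Rightarrow> 'b::{banach, second_countable_topology}"
  assumes sN: "sets N = sets M" and fM: "integrable M f" and fN: "integrable N f"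
  shows "integral\<^sup>L (add_measure M N) f = integral\<^sup>L M f + integral\<^sup>L N f"
proof -
  have "integrable (add_measure M N) f" using fM fN sN by (simp add: integrable_add_measure_iff)
  then show ?thesis
  proof induct
    case (base A c)
    then have A: "A \<in> sets M" "emeasure M A < \<infinity>" "emeasure N A < \<infinity>"
      using sN by (auto simp: emeasure_add_measure)
    have "measure (add_measure M N) A = measure M A + measure N A"
      using A sN by (simp add: measure_def emeasure_add_measure enn2real_plus)
    moreover have "emeasure (add_measure M N) A < \<infinity>" using A sN by (simp add: emeasure_add_measure)
    ultimately show ?case using A sN by (simp add: scaleR_add_left)
  next
    case (add f h)
    then show ?case using sN by (simp add: integrable_add_measure_iff)
  next
    case (lim f s)
    have si: "\<And>i. integrable M (s i)" "\<And>i. integrable N (s i)" and fi: "integrable M f" "integrable N f"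
      using lim sN by (auto simp: integrable_add_measure_iff)
    have spN: "space N = space M" using sets_eq_imp_space_eq[OF sN] .
    show ?case
    proof (rule LIMSEQ_unique)
      show "(\<lambda>i. integral\<^sup>L (add_measure M N) (s i)) \<longlonglongrightarrow> integral\<^sup>L (add_measure M N) f"
        by (rule integral_dominated_convergence[where w="\<lambda>x. 2 * norm (f x)"]) (use lim in auto)
      have "(\<lambda>i. integral\<^sup>L M (s i)) \<longlonglongrightarrow> integral\<^sup>L M f"
        by (rule integral_dominated_convergence[where w="\<lambda>x. 2 * norm (f x)"]) (use lim si fi in auto)
      moreover have "(\<lambda>i. integral\<^sup>L N (s i)) \<longlonglongrightarrow> integral\<^sup>L N f"
        by (rule integral_dominated_convergence[where w="\<lambda>x. 2 * norm (f x)"]) (use lim si fi spN in auto)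
      ultimately have "(\<lambda>i. integral\<^sup>L M (s i) + integral\<^sup>L N (s i)) \<longlonglongrightarrow> integral\<^sup>L M f + integral\<^sup>L N f"
        by (rule tendsto_add)
      then show "(\<lambda>i. integral\<^sup>L (add_measure M N) (s i)) \<longlonglongrightarrow> integral\<^sup>L M f + integral\<^sup>L N f"
        using lim by simp
    qed
  qed
qed

definition compacts_in_sets :: "'a::topological_space set \<Rightarrow> 'a measure \<Rightarrow> bool" where
  "compacts_in_sets X M \<longleftrightarrow> (\<forall>K. compact K \<and> K \<subseteq> X \<longrightarrow> K \<in> sets M)"

lemma radon_on_space: "radon_on X M \<Longrightarrow> space M = X"
  by (simp add: radon_on_def)

lemma radon_on_finite_measure: "radon_on X M \<Longrightarrow> finite_measure M"
  by (simp add: radon_on_def)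

lemma radon_on_inner_approx:
  assumes r: "radon_on X M" and A: "A \<in> sets M" and e: "0 < e"
  shows "\<exists>K. compact K \<and> K \<subseteq> A \<and> emeasure M A \<le> emeasure M K + ennreal e"
proof -
  have eq: "emeasure M A = (SUP K \<in> {K. compact K \<and> K \<subseteq> A}. emeasure M K)"
    using r A by (simp add: radon_on_def)
  have fin: "emeasure M A \<noteq> \<infinity>"
    using radon_on_finite_measure[OF r] by (simp add: finite_measure.emeasure_finite)
  obtain K where "K \<in> {K. compact K \<and> K \<subseteq> A}" "emeasure M A < emeasure M K + ennreal e"
    using SUP_approx_ennreal[OF e _ eq fin] by blast
  then show ?thesis by (auto intro!: exI[of _ K])
qed

lemma radon_onI:
  assumes sp: "space N = X" and st: "sets N = sets (restrict_space borel X)"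
    and fin: "finite_measure N" and cpt: "compacts_in_sets X N"
    and app: "\<And>A e. A \<in> sets N \<Longrightarrow> 0 < e \<Longrightarrow> \<exists>K. compact K \<and> K \<subseteq> A \<and> emeasure N A \<le> emeasure N K + ennreal e"
  shows "radon_on X N"
  unfolding radon_on_def
proof (intro conjI sp st fin ballI antisym)
  fix A assume A: "A \<in> sets N"
  have AX: "A \<subseteq> X" using sets.sets_into_space[OF A] sp by simp
  show "(SUP K \<in> {K. compact K \<and> K \<subseteq> A}. emeasure N K) \<le> emeasure N A"
  proof (rule SUP_least)
    fix K assume "K \<in> {K. compact K \<and> K \<subseteq> A}"
    then have "K \<in> sets N" "K \<subseteq> A" using cpt AX unfolding compacts_in_sets_def by auto
    then show "emeasure N K \<le> emeasure N A" using A by (simp add: emeasure_mono)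
  qed
  show "emeasure N A \<le> (SUP K \<in> {K. compact K \<and> K \<subseteq> A}. emeasure N K)"
  proof (rule ennreal_le_epsilon)
    fix e :: real assume "0 < e"
    then obtain K where K: "compact K" "K \<subseteq> A" "emeasure N A \<le> emeasure N K + ennreal e"
      using app[OF A] by blast
    have "emeasure N K \<le> (SUP K \<in> {K. compact K \<and> K \<subseteq> A}. emeasure N K)"
      using K by (intro SUP_upper) auto
    then show "emeasure N A \<le> (SUP K \<in> {K. compact K \<and> K \<subseteq> A}. emeasure N K) + ennreal e"
      using K(3) by (meson add_right_mono order_trans)
  qed
qed

lemma radon_on_dominated:
  assumes r: "radon_on X M" and cpt: "compacts_in_sets X M" and st: "sets N = sets M"
    and le: "\<And>A. A \<in> sets M \<Longrightarrow> emeasure N A \<le> emeasure M A"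
  shows "radon_on X N"
proof -
  have sp: "space N = X" using sets_eq_imp_space_eq[OF st] radon_on_space[OF r] by simp
  interpret M: finite_measure M using radon_on_finite_measure[OF r] .
  have finN: "finite_measure N"
  proof (rule finite_measureI)
    have "emeasure N (space N) \<le> emeasure M (space M)"
      using le[of "space M"] sets_eq_imp_space_eq[OF st] by simp
    then show "emeasure N (space N) \<noteq> \<infinity>" using M.emeasure_finite
      by (metis ennreal_top_neq_one infinity_ennreal_def neq_top_trans top.extremum_uniqueI)
  qed
  show ?thesis
  proof (rule radon_onI[OF sp _ finN])
    show "sets N = sets (restrict_space borel X)" using r st by (simp add: radon_on_def)
    show "compacts_in_sets X N" using cpt st by (simp add: compacts_in_sets_def)
    fix A and e :: real assume A: "A \<in> sets N" and e: "0 < e"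
    obtain K where K: "compact K" "K \<subseteq> A" "emeasure M A \<le> emeasure M K + ennreal e"
      using radon_on_inner_approx[OF r _ e, of A] A st by auto
    have AX: "A \<subseteq> X" using sets.sets_into_space[OF A] sp by simp
    have KM: "K \<in> sets M" using cpt K AX unfolding compacts_in_sets_def by auto
    have AM: "A \<in> sets M" using A st by simp
    have "emeasure M (A - K) + emeasure M K = emeasure M A"
      using KM AM K(2) by (subst plus_emeasure) (auto simp: Un_absorb2)
    then have "emeasure M (A - K) + emeasure M K \<le> ennreal e + emeasure M K"
      using K(3) by (simp add: add.commute)
    then have d: "emeasure M (A - K) \<le> ennreal e"
      using M.emeasure_finite[of K] by (simp add: top.not_eq_extremum)
    have "emeasure N A = emeasure N K + emeasure N (A - K)"
      using KM AM K(2) st by (subst plus_emeasure) (auto simp: Un_absorb1)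
    also have "\<dots> \<le> emeasure N K + ennreal e"
      using le[of "A - K"] d KM AM by (intro add_left_mono) auto
    finally show "\<exists>K. compact K \<and> K \<subseteq> A \<and> emeasure N A \<le> emeasure N K + ennreal e"
      using K by blast
  qed
qed

lemma radon_on_add_measure:
  assumes r1: "radon_on X M1" and r2: "radon_on X M2" and st: "sets M2 = sets M1" and cpt: "compacts_in_sets X M1"
  shows "radon_on X (add_measure M1 M2)"
proof (rule radon_onI)
  show "space (add_measure M1 M2) = X" using r1 by (simp add: radon_on_space)
  show "sets (add_measure M1 M2) = sets (restrict_space borel X)" using r1 by (simp add: radon_on_def)
  show "compacts_in_sets X (add_measure M1 M2)" using cpt by (simp add: compacts_in_sets_def)
  interpret M1: finite_measure M1 using radon_on_finite_measure[OF r1] .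
  interpret M2: finite_measure M2 using radon_on_finite_measure[OF r2] .
  show "finite_measure (add_measure M1 M2)"
    by (rule finite_measureI) (simp add: emeasure_add_measure[OF st] M1.emeasure_finite
        M2.emeasure_finite sets_eq_imp_space_eq[OF st, symmetric] top.not_eq_extremum ennreal_add_less_top)
  fix A and e :: real assume A: "A \<in> sets (add_measure M1 M2)" and e: "0 < e"
  have A1: "A \<in> sets M1" and A2: "A \<in> sets M2" using A st by auto
  have AX: "A \<subseteq> X" using sets.sets_into_space[OF A1] r1 by (simp add: radon_on_space)
  obtain K1 where K1: "compact K1" "K1 \<subseteq> A" "emeasure M1 A \<le> emeasure M1 K1 + ennreal (e/2)"
    using radon_on_inner_approx[OF r1 A1, of "e/2"] e by auto
  obtain K2 where K2: "compact K2" "K2 \<subseteq> A" "emeasure M2 A \<le> emeasure M2 K2 + ennreal (e/2)"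
    using radon_on_inner_approx[OF r2 A2, of "e/2"] e by auto
  have KM: "K1 \<union> K2 \<in> sets M1" using cpt K1 K2 AX unfolding compacts_in_sets_def by (auto intro: compact_Un)
  have "emeasure (add_measure M1 M2) A = emeasure M1 A + emeasure M2 A" by (simp add: emeasure_add_measure[OF st])
  also have "\<dots> \<le> (emeasure M1 (K1 \<union> K2) + ennreal (e/2)) + (emeasure M2 (K1 \<union> K2) + ennreal (e/2))"
    by (intro add_mono order_trans[OF K1(3)] order_trans[OF K2(3)] order_refl emeasure_mono)
       (use KM st in auto)
  also have "\<dots> = emeasure (add_measure M1 M2) (K1 \<union> K2) + ennreal e"
    using e by (simp add: emeasure_add_measure[OF st] ennreal_plus[symmetric] del: ennreal_plus add: ac_simps)
  finally show "\<exists>K. compact K \<and> K \<subseteq> A \<and> emeasure (add_measure M1 M2) A \<le> emeasure (add_measure M1 M2) K + ennreal e"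
    using K1 K2 by (intro exI[of _ "K1 \<union> K2"]) (auto intro: compact_Un)
qed

lemma radon_on_distr:
  assumes r: "radon_on X M" and cpt: "compacts_in_sets X M" and T: "T \<in> measurable M N"
    and N: "sets N = sets M"
    and c: "continuous_on X T" and TX: "T ` X \<subseteq> X"
  shows "radon_on X (distr M N T)"
proof (rule radon_onI)
  show "space (distr M N T) = X" using r sets_eq_imp_space_eq[OF N] by (simp add: radon_on_space)
  show "sets (distr M N T) = sets (restrict_space borel X)" using r N by (simp add: radon_on_def)
  show "compacts_in_sets X (distr M N T)" using cpt N by (simp add: compacts_in_sets_def)
  interpret M: finite_measure M using radon_on_finite_measure[OF r] .
  show "finite_measure (distr M N T)" by (rule M.finite_measure_distr[OF T])
  fix A and e :: real assume A: "A \<in> sets (distr M N T)" and e: "0 < e"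
  have spM: "space M = X" using r by (simp add: radon_on_space)
  have B: "T -` A \<inter> X \<in> sets M" using measurable_sets[OF T, of A] A N spM by simp
  obtain K where K: "compact K" "K \<subseteq> T -` A \<inter> X" "emeasure M (T -` A \<inter> X) \<le> emeasure M K + ennreal e"
    using radon_on_inner_approx[OF r B e] by auto
  have TK: "compact (T ` K)" using K by (intro compact_continuous_image continuous_on_subset[OF c]) auto
  have TKA: "T ` K \<subseteq> A" using K by auto
  have "T ` K \<subseteq> X" using K TX by auto
  then have TKs: "T ` K \<in> sets N" using cpt TK N unfolding compacts_in_sets_def by simp
  have "emeasure (distr M N T) A = emeasure M (T -` A \<inter> X)"
    using A N spM by (simp add: emeasure_distr[OF T])
  also have "\<dots> \<le> emeasure M (T -` (T ` K) \<inter> X) + ennreal e"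
    using K measurable_sets[OF T TKs] spM
    by (intro order_trans[OF K(3)] add_right_mono emeasure_mono) auto
  also have "\<dots> = emeasure (distr M N T) (T ` K) + ennreal e"
    using TKs spM by (simp add: emeasure_distr[OF T])
  finally show "\<exists>K. compact K \<and> K \<subseteq> A \<and> emeasure (distr M N T) A \<le> emeasure (distr M N T) K + ennreal e"
    using TK TKA by blast
qed

lemma compacts_in_sets_fun:
  fixes X :: "('g \<Rightarrow> 'a::metric_space) set"
  assumes "sets M = sets (restrict_space borel X)"
  shows "compacts_in_sets X M"
  unfolding compacts_in_sets_def
proof (intro allI impI)
  fix K :: "('g \<Rightarrow> 'a) set"
  assume K: "compact K \<and> K \<subseteq> X"
  then have "X \<inter> K \<in> sets (restrict_space borel X)"
    by (auto simp: sets_restrict_space intro!: borel_closed compact_imp_closed_fun)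
  moreover have "X \<inter> K = K" using K by auto
  ultimately show "K \<in> sets M" using assms by simp
qed

lemma borel_measurable_coordinate:
  fixes X :: "('g \<Rightarrow> 'a::topological_space) set"
  assumes "sets M = sets (restrict_space borel X)"
  shows "(\<lambda>\<gamma>. \<gamma> g) \<in> borel_measurable M"
  using borel_measurable_continuous_on_restrict[OF continuous_on_coordinate[of X g]]
  by (subst measurable_cong_sets[OF assms refl])

lemma measurable_continuous_self:
  assumes M: "sets M = sets (restrict_space borel X)"
    and "continuous_on X T" and "\<And>x. x \<in> X \<Longrightarrow> T x \<in> X"
  shows "T \<in> measurable M M"
proof -
  have "T \<in> measurable (restrict_space borel X) (restrict_space borel X)"
    using assms(2,3) borel_measurable_continuous_on_restrict[OF assms(2)]
    by (intro measurable_restrict_space2) (auto simp: space_restrict_space)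
  then show ?thesis by (subst measurable_cong_sets[OF M M])
qed

lemma absolutely_continuous_add_measure:
  assumes "sets N = sets M"
  shows "absolutely_continuous (add_measure M N) M"
  unfolding absolutely_continuous_def
  using assms by (auto simp: emeasure_add_measure null_sets_def)

lemma finite_measure_real_density:
  assumes "finite_measure N" and "finite_measure M"
    and "absolutely_continuous N M" and "sets M = sets N"
  obtains f where "f \<in> borel_measurable N" "\<And>x. 0 \<le> f x"
    and "density N (\<lambda>x. ennreal (f x)) = M"
proof -
  interpret N: finite_measure N by fact
  obtain h where h: "h \<in> borel_measurable N" "density N h = M"
    using N.Radon_Nikodym[OF assms(3,4)] by blast
  have "(\<integral>\<^sup>+x. h x \<partial>N) = emeasure (density N h) (space N)"
    using h by (subst emeasure_density) (auto intro!: nn_integral_cong)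
  also have "\<dots> \<noteq> \<infinity>"
    using h(2) finite_measure.emeasure_finite[OF assms(2)] by simp
  finally have "AE x in N. h x \<noteq> \<infinity>"
    using nn_integral_PInf_AE[OF h(1)] by simp
  then have "density N (\<lambda>x. ennreal (enn2real (h x))) = density N h"
    using h(1) by (intro density_cong) (auto elim!: AE_mp simp: top.not_eq_extremum)
  with h show ?thesis
    by (intro that[of "\<lambda>x. enn2real (h x)"]) auto
qed

lemma integrable_coordinate:
  assumes "finite_measure M" and "sets M = sets (restrict_space borel dual_hom)"
  shows "integrable M (\<lambda>\<gamma>::'g::ab_group_add \<Rightarrow> quat. \<gamma> g)"
proof -
  interpret finite_measure M by fact
  have "space M = dual_hom"
    using sets_eq_imp_space_eq[OF assms(2)] by (simp add: space_restrict_space)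
  then show ?thesis
    using borel_measurable_coordinate[OF assms(2)]
    by (intro integrable_const_bound[where B=1]) (auto simp: dual_hom_def)
qed

lemma radon_star_measure:
  assumes "radon_on dual_hom \<mu>"
  shows "radon_on dual_hom (star_measure (\<mu> :: ('g::ab_group_add \<Rightarrow> quat) measure))"
proof -
  have sets: "sets \<mu> = sets (restrict_space borel dual_hom)"
    using assms by (simp add: radon_on_def)
  show ?thesis
    unfolding star_measure_def
    by (rule radon_on_distr[OF assms compacts_in_sets_fun[OF sets]
          measurable_continuous_self[OF sets continuous_on_dual_star dual_star_dual_hom] refl
          continuous_on_dual_star]) (auto intro: dual_star_dual_hom)
qed

locale dual_measure_density =
  fixes \<phi> :: "'g::ab_group_add \<Rightarrow> quat" and \<mu> :: "('g \<Rightarrow> quat) measure"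
    and \<tau> :: "('g \<Rightarrow> quat) measure" and f :: "('g \<Rightarrow> quat) \<Rightarrow> real"
  assumes radon: "radon_on dual_hom \<mu>"
    and represents: "\<forall>g. \<phi> g = (\<integral>\<gamma>. \<gamma> g \<partial>\<mu>)"
    and unique: "\<forall>\<nu>. radon_on dual_hom \<nu> \<and> (\<forall>g. \<phi> g = (\<integral>\<gamma>. \<gamma> g \<partial>\<nu>)) \<longrightarrow> \<nu> = \<mu>"
    and tau: "\<tau> = add_measure \<mu> (star_measure \<mu>)"
    and f_measurable [measurable]: "f \<in> borel_measurable \<tau>"
    and f_nonneg: "\<And>x. 0 \<le> f x"
    and density_f: "density \<tau> (\<lambda>x. ennreal (f x)) = \<mu>"
begin

lemma sets_mu: "sets \<mu> = sets (restrict_space borel dual_hom)"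
  and space_mu: "space \<mu> = dual_hom"
  using radon by (simp_all add: radon_on_def)

lemma sets_star_measure [simp, measurable_cong]: "sets (star_measure \<mu>) = sets \<mu>"
  by (simp add: star_measure_def)

lemma sets_tau [measurable_cong]: "sets \<tau> = sets \<mu>"
  by (simp add: tau)

lemma space_tau: "space \<tau> = dual_hom"
  by (simp add: tau space_mu)

lemma sets_tau_borel: "sets \<tau> = sets (restrict_space borel dual_hom)"
  by (simp add: sets_tau sets_mu)

lemma measurable_dual_star: "dual_star \<in> measurable \<mu> \<mu>"
  by (rule measurable_continuous_self[OF sets_mu continuous_on_dual_star dual_star_dual_hom])

lemma measurable_dual_star_tau: "dual_star \<in> measurable \<tau> \<tau>"
  using measurable_dual_star by (simp add: measurable_cong_sets[OF sets_tau sets_tau])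

lemma f_dual_star_measurable [measurable]: "(\<lambda>x. f (dual_star x)) \<in> borel_measurable \<tau>"
  using measurable_compose[OF measurable_dual_star_tau f_measurable] .

lemma coordinate_measurable [measurable]: "(\<lambda>\<gamma>. \<gamma> g) \<in> borel_measurable \<tau>"
  by (rule borel_measurable_coordinate[OF sets_tau_borel])

lemma emeasure_star_measure:
  "A \<in> sets \<mu> \<Longrightarrow> emeasure (star_measure \<mu>) A = emeasure \<mu> (dual_star -` A \<inter> dual_hom)"
  unfolding star_measure_def by (simp add: emeasure_distr[OF measurable_dual_star] space_mu)

lemma distr_dual_star_tau: "distr \<tau> \<tau> dual_star = \<tau>"
proof (rule measure_eqI)
  fix A assume "A \<in> sets (distr \<tau> \<tau> dual_star)"
  then have A: "A \<in> sets \<mu>" by (simp add: sets_tau)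
  have A': "dual_star -` A \<inter> dual_hom \<in> sets \<mu>"
    using measurable_sets[OF measurable_dual_star A] by (simp add: space_mu)
  have "dual_star -` (dual_star -` A \<inter> dual_hom) \<inter> dual_hom = A"
    using sets.sets_into_space[OF A] by (auto simp: space_mu intro: dual_star_dual_hom)
  then have "emeasure \<tau> (dual_star -` A \<inter> dual_hom) = emeasure (star_measure \<mu>) A + emeasure \<mu> A"
    using A A' by (simp add: tau emeasure_add_measure emeasure_star_measure add.commute)
  moreover have "emeasure (distr \<tau> \<tau> dual_star) A = emeasure \<tau> (dual_star -` A \<inter> dual_hom)"
    using A by (simp add: emeasure_distr[OF measurable_dual_star_tau] space_tau sets_tau)
  ultimately show "emeasure (distr \<tau> \<tau> dual_star) A = emeasure \<tau> A"
    using A by (simp add: tau emeasure_add_measure add.commute)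
qed simp

lemma nn_integral_dual_star:
  "h \<in> borel_measurable \<tau> \<Longrightarrow> (\<integral>\<^sup>+x. h (dual_star x) \<partial>\<tau>) = (\<integral>\<^sup>+x. h x \<partial>\<tau>)"
  by (subst (2) distr_dual_star_tau[symmetric]) (simp add: nn_integral_distr[OF measurable_dual_star_tau])

lemma integral_dual_star:
  fixes h :: "_ \<Rightarrow> 'b::{banach, second_countable_topology}"
  shows "h \<in> borel_measurable \<tau> \<Longrightarrow> (\<integral>x. h (dual_star x) \<partial>\<tau>) = (\<integral>x. h x \<partial>\<tau>)"
  by (subst (2) distr_dual_star_tau[symmetric]) (simp add: integral_distr[OF measurable_dual_star_tau])

lemma emeasure_mu_density:
  "A \<in> sets \<mu> \<Longrightarrow> emeasure \<mu> A = (\<integral>\<^sup>+x. ennreal (f x) * indicator A x \<partial>\<tau>)"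
  by (subst density_f[symmetric]) (simp add: emeasure_density sets_tau)

lemma star_measure_density: "density \<tau> (\<lambda>x. ennreal (f (dual_star x))) = star_measure \<mu>"
proof (rule measure_eqI)
  fix A assume "A \<in> sets (density \<tau> (\<lambda>x. ennreal (f (dual_star x))))"
  then have A: "A \<in> sets \<mu>" by (simp add: sets_tau)
  have A' [measurable]: "dual_star -` A \<inter> dual_hom \<in> sets \<tau>"
    using measurable_sets[OF measurable_dual_star A] by (simp add: space_mu sets_tau)
  have "emeasure (density \<tau> (\<lambda>x. ennreal (f (dual_star x)))) A
      = (\<integral>\<^sup>+x. ennreal (f (dual_star x)) * indicator (dual_star -` A \<inter> dual_hom) (dual_star x) \<partial>\<tau>)"
    using A by (auto simp: emeasure_density sets_tau space_tau dual_star_dual_hom indicator_def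
        intro!: nn_integral_cong)
  also have "\<dots> = (\<integral>\<^sup>+x. ennreal (f x) * indicator (dual_star -` A \<inter> dual_hom) x \<partial>\<tau>)"
    by (rule nn_integral_dual_star) measurable
  also have "\<dots> = emeasure (star_measure \<mu>) A"
    using A A' by (simp add: emeasure_star_measure emeasure_mu_density sets_tau)
  finally show "emeasure (density \<tau> (\<lambda>x. ennreal (f (dual_star x)))) A = emeasure (star_measure \<mu>) A" .
qed (simp add: sets_tau)

lemma integrable_f: "integrable \<tau> f"
proof -
  have "emeasure \<mu> dual_hom = (\<integral>\<^sup>+x. ennreal (f x) * indicator dual_hom x \<partial>\<tau>)"
    using emeasure_mu_density sets.top[of \<mu>] by (simp add: space_mu)
  also have "\<dots> = (\<integral>\<^sup>+x. ennreal (f x) \<partial>\<tau>)"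
    by (rule nn_integral_cong) (simp add: space_tau)
  finally have "(\<integral>\<^sup>+x. ennreal (f x) \<partial>\<tau>) = emeasure \<mu> dual_hom" ..
  also have "\<dots> < \<infinity>"
    using finite_measure.emeasure_finite[OF radon_on_finite_measure[OF radon]]
    by (simp add: top.not_eq_extremum)
  finally show ?thesis using f_nonneg by (intro integrableI_nonneg) auto
qed

lemma radon_density_le:
  assumes [measurable]: "h \<in> borel_measurable \<tau>" and "\<And>x. 0 \<le> h x" "\<And>x. h x \<le> f x"
  shows "radon_on dual_hom (density \<tau> (\<lambda>x. ennreal (h x)))"
proof (rule radon_on_dominated[OF radon compacts_in_sets_fun[OF sets_mu]])
  fix A assume A: "A \<in> sets \<mu>"
  have "emeasure (density \<tau> (\<lambda>x. ennreal (h x))) A = (\<integral>\<^sup>+x. ennreal (h x) * indicator A x \<partial>\<tau>)"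
    using A by (simp add: emeasure_density sets_tau)
  also have "\<dots> \<le> (\<integral>\<^sup>+x. ennreal (f x) * indicator A x \<partial>\<tau>)"
    using assms(3) by (intro nn_integral_mono mult_right_mono) (auto simp: ennreal_leI)
  finally show "emeasure (density \<tau> (\<lambda>x. ennreal (h x))) A \<le> emeasure \<mu> A"
    using A by (simp add: emeasure_mu_density)
qed (simp add: sets_tau)

lemma integrable_scaled_coordinate:
  assumes [measurable]: "h \<in> borel_measurable \<tau>" and "\<And>x. 0 \<le> h x" "\<And>x. h x \<le> f x"
  shows "integrable \<tau> (\<lambda>x. h x *\<^sub>R x g)"
  using assms(2,3)
  by (intro Bochner_Integration.integrable_bound[OF integrable_f] AE_I2)
     (auto simp: space_tau dual_hom_def abs_of_nonneg[OF f_nonneg])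

lemma integral_symmetric_weight_real:
  assumes [measurable]: "w \<in> borel_measurable \<tau>" and "\<And>x. 0 \<le> w x" "\<And>x. w x \<le> f x"
    and symmetric: "\<And>x. x \<in> dual_hom \<Longrightarrow> w (dual_star x) = w x"
  shows "(\<integral>x. w x *\<^sub>R x g \<partial>\<tau>) \<in> range qreal"
proof -
  have "qcnj (\<integral>x. w x *\<^sub>R x g \<partial>\<tau>) = (\<integral>x. qcnj (w x *\<^sub>R x g) \<partial>\<tau>)"
    using integrable_scaled_coordinate[OF assms(1-3)]
    by (rule integral_bounded_linear[OF bounded_linear_qcnj, symmetric])
  also have "\<dots> = (\<integral>x. w (dual_star x) *\<^sub>R dual_star x g \<partial>\<tau>)"
    using symmetric
    by (intro Bochner_Integration.integral_cong)
       (auto simp: space_tau dual_star_def linear_simps(5)[OF bounded_linear_qcnj])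
  also have "\<dots> = (\<integral>x. w x *\<^sub>R x g \<partial>\<tau>)"
    by (rule integral_dual_star) measurable
  finally show ?thesis by (simp add: qcnj_eq_iff_real)
qed

definition rebalanced :: "quat \<Rightarrow> (('g \<Rightarrow> quat) \<Rightarrow> real) \<Rightarrow> ('g \<Rightarrow> quat) measure" where
  "rebalanced u w = add_measure (density \<tau> (\<lambda>x. ennreal (f x - w x)))
     (distr (density \<tau> (\<lambda>x. ennreal (w x))) \<tau> (dual_rot u))"

context
  fixes u :: quat and w :: "('g \<Rightarrow> quat) \<Rightarrow> real"
  assumes u: "norm u = 1" and w_measurable [measurable]: "w \<in> borel_measurable \<tau>"
    and w_nonneg: "\<And>x. 0 \<le> w x" and w_le_f: "\<And>x. w x \<le> f x"
begin

lemma measurable_dual_rot: "dual_rot u \<in> measurable (density \<tau> (\<lambda>x. ennreal (w x))) \<tau>"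
  using measurable_continuous_self[OF sets_tau_borel continuous_on_dual_rot dual_rot_dual_hom[OF u]]
  by (simp add: measurable_cong_sets[OF sets_density refl])

lemma radon_rotated_part: "radon_on dual_hom (distr (density \<tau> (\<lambda>x. ennreal (w x))) \<tau> (dual_rot u))"
  using w_nonneg w_le_f
  by (intro radon_on_distr[OF radon_density_le compacts_in_sets_fun measurable_dual_rot _
        continuous_on_dual_rot]) (auto simp: sets_tau_borel dual_rot_dual_hom[OF u])

lemma radon_remaining_part: "radon_on dual_hom (density \<tau> (\<lambda>x. ennreal (f x - w x)))"
  using w_nonneg w_le_f by (intro radon_density_le) auto

lemma radon_rebalanced: "radon_on dual_hom (rebalanced u w)"
  unfolding rebalanced_def
  by (rule radon_on_add_measure[OF radon_remaining_part radon_rotated_part _ compacts_in_sets_fun])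
     (simp_all add: sets_tau_borel)

lemma integral_coordinate_rebalanced:
  "(\<integral>\<gamma>. \<gamma> g \<partial>rebalanced u w) = (\<integral>x. (f x - w x) *\<^sub>R x g \<partial>\<tau>) + qrot u (\<integral>x. w x *\<^sub>R x g \<partial>\<tau>)"
proof -
  have "(\<integral>\<gamma>. \<gamma> g \<partial>rebalanced u w)
      = (\<integral>\<gamma>. \<gamma> g \<partial>density \<tau> (\<lambda>x. ennreal (f x - w x)))
        + (\<integral>\<gamma>. \<gamma> g \<partial>distr (density \<tau> (\<lambda>x. ennreal (w x))) \<tau> (dual_rot u))"
    unfolding rebalanced_def
    by (intro integral_add_measure integrable_coordinate
        radon_on_finite_measure[OF radon_remaining_part] radon_on_finite_measure[OF radon_rotated_part])
       (simp_all add: sets_tau_borel)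
  also have "(\<integral>\<gamma>. \<gamma> g \<partial>density \<tau> (\<lambda>x. ennreal (f x - w x))) = (\<integral>x. (f x - w x) *\<^sub>R x g \<partial>\<tau>)"
    using w_le_f by (intro integral_density) auto
  also have "(\<integral>\<gamma>. \<gamma> g \<partial>distr (density \<tau> (\<lambda>x. ennreal (w x))) \<tau> (dual_rot u))
      = (\<integral>x. w x *\<^sub>R qrot u (x g) \<partial>\<tau>)"
    using w_nonneg
    by (simp add: integral_distr[OF measurable_dual_rot] integral_density dual_rot_def)
  also have "\<dots> = qrot u (\<integral>x. w x *\<^sub>R x g \<partial>\<tau>)"
    using integrable_scaled_coordinate[OF w_measurable w_nonneg w_le_f]
    by (simp add: integral_bounded_linear[OF bounded_linear_qrot, symmetric]
        linear_simps(5)[OF bounded_linear_qrot])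
  finally show ?thesis .
qed

lemma emeasure_rebalanced:
  assumes S [measurable]: "S \<in> sets \<tau>"
    and vanishes: "\<And>\<gamma>. \<gamma> \<in> dual_hom \<Longrightarrow> dual_rot u \<gamma> \<in> S \<Longrightarrow> w \<gamma> = 0"
  shows "emeasure (rebalanced u w) S = (\<integral>\<^sup>+x. ennreal (f x - w x) * indicator S x \<partial>\<tau>)"
proof -
  have [measurable]: "dual_rot u -` S \<inter> dual_hom \<in> sets \<tau>"
    using measurable_sets[OF measurable_dual_rot S] by (simp add: space_tau)
  have "emeasure (distr (density \<tau> (\<lambda>x. ennreal (w x))) \<tau> (dual_rot u)) S
      = (\<integral>\<^sup>+x. ennreal (w x) * indicator (dual_rot u -` S \<inter> dual_hom) x \<partial>\<tau>)"
    by (simp add: emeasure_distr[OF measurable_dual_rot] emeasure_density space_tau)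
  also have "\<dots> = (\<integral>\<^sup>+x. 0 \<partial>\<tau>)"
    using vanishes by (intro nn_integral_cong) (auto simp: indicator_def space_tau)
  finally show ?thesis
    by (simp add: rebalanced_def emeasure_add_measure emeasure_density)
qed

lemma rebalanced_eq_mu:
  assumes symmetric: "\<And>x. x \<in> dual_hom \<Longrightarrow> w (dual_star x) = w x"
  shows "rebalanced u w = \<mu>"
proof -
  have "\<phi> g = (\<integral>\<gamma>. \<gamma> g \<partial>rebalanced u w)" for g
  proof -
    have "(\<integral>\<gamma>. \<gamma> g \<partial>rebalanced u w) = (\<integral>x. (f x - w x) *\<^sub>R x g \<partial>\<tau>) + (\<integral>x. w x *\<^sub>R x g \<partial>\<tau>)"
      using integral_coordinate_rebalanced qrot_real[OF u]
        integral_symmetric_weight_real[OF w_measurable w_nonneg w_le_f symmetric] by simp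
    also have "\<dots> = (\<integral>x. f x *\<^sub>R x g \<partial>\<tau>)"
      using w_nonneg w_le_f
      by (subst Bochner_Integration.integral_add[symmetric])
         (auto intro!: integrable_scaled_coordinate simp flip: scaleR_add_left)
    also have "\<dots> = \<phi> g"
      using represents f_nonneg by (simp flip: density_f add: integral_density)
    finally show ?thesis ..
  qed
  then show ?thesis
    using unique radon_rebalanced by blast
qed

end

lemma coordinate_preimage_sets:
  "P \<in> sets borel \<Longrightarrow> {\<gamma> \<in> dual_hom. \<gamma> g \<in> P} \<in> sets \<tau>"
proof -
  assume "P \<in> sets borel"
  moreover have "{\<gamma> \<in> dual_hom. \<gamma> g \<in> P} = (\<lambda>\<gamma>. \<gamma> g) -` P \<inter> space \<tau>"
    by (auto simp: space_tau)
  ultimately show ?thesis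
    using measurable_sets[OF coordinate_measurable] by simp
qed

lemma nonreal_sets [measurable]: "dual_hom - dual_hom_real \<in> sets \<tau>"
proof -
  have "dual_hom - dual_hom_real = dual_hom \<inter> (\<Union>g. {\<gamma>. \<gamma> g \<notin> range qreal})"
    by (auto simp: dual_hom_real_def)
  also have "\<dots> \<in> sets \<tau>"
    unfolding sets_tau_borel sets_restrict_space
    by (intro imageI borel_open open_UN ballI open_nonreal_coordinate)
  finally show ?thesis .
qed

text \<open>The density of \<open>\<mu> \<sqinter> \<mu>\<^sup>*\<close> on the non-real characters.\<close>

definition overlap :: "('g \<Rightarrow> quat) \<Rightarrow> real" where
  "overlap \<gamma> = (if \<gamma> \<in> dual_hom - dual_hom_real then min (f \<gamma>) (f (dual_star \<gamma>)) else 0)"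

lemma overlap_measurable [measurable]: "overlap \<in> borel_measurable \<tau>"
  unfolding overlap_def by measurable

lemma overlap_nonneg: "0 \<le> overlap x"
  and overlap_le_f: "overlap x \<le> f x"
  by (simp_all add: overlap_def f_nonneg)

lemma overlap_dual_star: "x \<in> dual_hom \<Longrightarrow> overlap (dual_star x) = overlap x"
  by (simp only: overlap_def dual_star_nonreal_iff dual_star_dual_star min.commute)

lemma overlap_displaced_null:
  assumes S [measurable]: "S \<in> sets \<tau>"
    and symmetric: "\<And>\<gamma>. \<gamma> \<in> dual_hom \<Longrightarrow> dual_star \<gamma> \<in> S \<longleftrightarrow> \<gamma> \<in> S"
    and u: "norm u = 1" and displaced: "\<And>\<gamma>. \<gamma> \<in> S \<Longrightarrow> dual_rot u \<gamma> \<notin> S"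
  shows "emeasure (density \<tau> (\<lambda>x. ennreal (overlap x))) S = 0"
proof -
  define w where "w x = overlap x * indicator S x" for x
  have w_measurable [measurable]: "w \<in> borel_measurable \<tau>"
    unfolding w_def by measurable
  have w_nonneg: "0 \<le> w x" and w_le_f: "w x \<le> f x" for x
    using overlap_nonneg[of x] overlap_le_f[of x] f_nonneg[of x] by (auto simp: w_def indicator_def)
  have w_symmetric: "x \<in> dual_hom \<Longrightarrow> w (dual_star x) = w x" for x
    using symmetric[of x] by (simp add: w_def overlap_dual_star indicator_def)
  have "emeasure \<mu> S = emeasure (rebalanced u w) S"
    using rebalanced_eq_mu[OF u w_measurable w_nonneg w_le_f w_symmetric] by simp
  also have "\<dots> = (\<integral>\<^sup>+x. ennreal (f x - w x) * indicator S x \<partial>\<tau>)"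
    using displaced
    by (intro emeasure_rebalanced[OF u w_measurable w_nonneg w_le_f S]) (auto simp: w_def indicator_def)
  finally have rest: "emeasure \<mu> S = (\<integral>\<^sup>+x. ennreal (f x - w x) * indicator S x \<partial>\<tau>)" .
  have "emeasure \<mu> S = (\<integral>\<^sup>+x. ennreal (f x) * indicator S x \<partial>\<tau>)"
    using S by (simp add: emeasure_mu_density sets_tau)
  also have "\<dots> = (\<integral>\<^sup>+x. ennreal (f x - w x) * indicator S x + ennreal (w x) * indicator S x \<partial>\<tau>)"
    using w_nonneg w_le_f
    by (intro nn_integral_cong) (auto simp: indicator_def simp flip: ennreal_plus)
  also have "\<dots> = (\<integral>\<^sup>+x. ennreal (f x - w x) * indicator S x \<partial>\<tau>)
      + (\<integral>\<^sup>+x. ennreal (w x) * indicator S x \<partial>\<tau>)"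
    by (rule nn_integral_add) auto
  also have "(\<integral>\<^sup>+x. ennreal (w x) * indicator S x \<partial>\<tau>) = emeasure (density \<tau> (\<lambda>x. ennreal (overlap x))) S"
    by (auto simp: emeasure_density w_def indicator_def intro!: nn_integral_cong)
  finally have "emeasure \<mu> S = emeasure \<mu> S + emeasure (density \<tau> (\<lambda>x. ennreal (overlap x))) S"
    by (simp only: flip: rest)
  moreover have "emeasure \<mu> S \<noteq> \<infinity>"
    using finite_measure.emeasure_finite[OF radon_on_finite_measure[OF radon]] by simp
  ultimately show ?thesis
    by (metis add.right_neutral ennreal_add_left_cancel)
qed

lemma overlap_piece_null:
  assumes P: "P \<in> sets borel" and conj: "\<And>q. qcnj q \<in> P \<longleftrightarrow> q \<in> P"
    and u: "norm u = 1" and displaced: "\<And>q. q \<in> P \<Longrightarrow> qrot u q \<notin> P"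
  shows "{\<gamma> \<in> dual_hom. \<gamma> g \<in> P} \<in> null_sets (density \<tau> (\<lambda>x. ennreal (overlap x)))"
  using overlap_displaced_null[OF coordinate_preimage_sets[OF P] _ u] coordinate_preimage_sets[OF P]
  by (auto simp: dual_star_def dual_rot_def conj displaced dual_star_dual_hom[simplified dual_star_def])

lemma overlap_nonreal_coordinate_null:
  "{\<gamma> \<in> dual_hom. \<gamma> g \<notin> range qreal} \<in> null_sets (density \<tau> (\<lambda>x. ennreal (overlap x)))"
proof (rule null_sets_subset)
  show "{\<gamma> \<in> dual_hom. \<gamma> g \<notin> range qreal} \<in> sets (density \<tau> (\<lambda>x. ennreal (overlap x)))"
    using coordinate_preimage_sets[OF borel_open[OF open_nonreal]] by simp
  show "{\<gamma> \<in> dual_hom. \<gamma> g \<notin> range qreal} \<subseteq> {\<gamma> \<in> dual_hom. \<gamma> g \<in> quadrant13}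
      \<union> {\<gamma> \<in> dual_hom. \<gamma> g \<in> quadrant24} \<union> {\<gamma> \<in> dual_hom. \<gamma> g \<in> complex_nonreal}"
    using nonreal_cases by blast
  show "{\<gamma> \<in> dual_hom. \<gamma> g \<in> quadrant13} \<union> {\<gamma> \<in> dual_hom. \<gamma> g \<in> quadrant24}
      \<union> {\<gamma> \<in> dual_hom. \<gamma> g \<in> complex_nonreal} \<in> null_sets (density \<tau> (\<lambda>x. ennreal (overlap x)))"
    by (intro null_sets.Un
        overlap_piece_null[OF quadrant13_borel _ norm_quarter_turn quadrant13_displaced]
        overlap_piece_null[OF quadrant24_borel _ norm_quarter_turn quadrant24_displaced]
        overlap_piece_null[OF complex_nonreal_borel _ norm_tilt complex_nonreal_displaced]
        qcnj_mem_pieces)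
qed

lemma overlap_nonreal_null:
  "dual_hom - dual_hom_real \<in> null_sets (density \<tau> (\<lambda>x. ennreal (overlap x)))"
proof -
  let ?\<nu> = "density \<tau> (\<lambda>x. ennreal (overlap x))"
  have compact_null: "K \<in> null_sets ?\<nu>" if K: "compact K" "K \<subseteq> dual_hom - dual_hom_real" for K
  proof -
    have "K \<subseteq> (\<Union>g\<in>UNIV. {\<gamma>. \<gamma> g \<notin> range qreal})"
      using K(2) by (auto simp: dual_hom_real_def)
    then obtain G where "finite G" and G: "K \<subseteq> (\<Union>g\<in>G. {\<gamma>. \<gamma> g \<notin> range qreal})"
      by (rule compactE_image[OF K(1) open_nonreal_coordinate]) blast
    have "(\<Union>g\<in>G. {\<gamma> \<in> dual_hom. \<gamma> g \<notin> range qreal}) \<in> null_sets ?\<nu>"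
      using \<open>finite G\<close> by (intro null_sets_UN' overlap_nonreal_coordinate_null countable_finite)
    moreover have "K \<in> sets ?\<nu>"
      using compacts_in_sets_fun[of ?\<nu> dual_hom] K by (auto simp: compacts_in_sets_def sets_tau_borel)
    moreover have "K \<subseteq> (\<Union>g\<in>G. {\<gamma> \<in> dual_hom. \<gamma> g \<notin> range qreal})"
      using G K(2) by blast
    ultimately show ?thesis
      by (rule null_sets_subset)
  qed
  have "radon_on dual_hom ?\<nu>"
    by (rule radon_density_le) (auto simp: overlap_nonneg overlap_le_f)
  then have "emeasure ?\<nu> (dual_hom - dual_hom_real)
      = (SUP K \<in> {K. compact K \<and> K \<subseteq> dual_hom - dual_hom_real}. emeasure ?\<nu> K)"
    using nonreal_sets unfolding radon_on_def by simp
  also have "\<dots> = 0"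
    using compact_null by (intro antisym SUP_least) auto
  finally show ?thesis
    using nonreal_sets by (simp add: null_sets_def)
qed

lemma AE_overlap_zero: "AE x in \<tau>. overlap x = 0"
proof -
  have "(\<integral>\<^sup>+x. ennreal (overlap x) \<partial>\<tau>)
      = (\<integral>\<^sup>+x. ennreal (overlap x) * indicator (dual_hom - dual_hom_real) x \<partial>\<tau>)"
    by (intro nn_integral_cong) (simp add: overlap_def)
  also have "\<dots> = emeasure (density \<tau> (\<lambda>x. ennreal (overlap x))) (dual_hom - dual_hom_real)"
    by (rule emeasure_density[symmetric]) auto
  also have "\<dots> = 0"
    using overlap_nonreal_null by auto
  finally show ?thesis
    by (simp add: nn_integral_0_iff_AE overlap_nonneg)
qed

lemma mutually_singular_nonreal:
  "mutually_singular (restrict_measure (star_measure \<mu>) (dual_hom - dual_hom_real))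
     (restrict_measure \<mu> (dual_hom - dual_hom_real))"
proof -
  define A where "A = {x \<in> dual_hom. 0 < f x}"
  have "A = {x \<in> space \<tau>. 0 < f x}"
    by (simp add: A_def space_tau)
  then have A [measurable]: "A \<in> sets \<tau>"
    by simp
  have "emeasure (density (star_measure \<mu>) (indicator (dual_hom - dual_hom_real))) A
      = (\<integral>\<^sup>+x. indicator (dual_hom - dual_hom_real) x * indicator A x \<partial>star_measure \<mu>)"
    by (rule emeasure_density) (use A in \<open>auto simp: sets_tau\<close>)
  also have "\<dots> = (\<integral>\<^sup>+x. ennreal (f (dual_star x)) * (indicator (dual_hom - dual_hom_real) x * indicator A x) \<partial>\<tau>)"
    by (subst star_measure_density[symmetric], rule nn_integral_density) auto
  also have "\<dots> = (\<integral>\<^sup>+x. 0 \<partial>\<tau>)"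
    using AE_overlap_zero
  proof (intro nn_integral_cong_AE, eventually_elim)
    case (elim x)
    then show ?case
      by (auto simp: overlap_def A_def indicator_def min_def split: if_splits)
  qed
  finally have star_null: "emeasure (density (star_measure \<mu>) (indicator (dual_hom - dual_hom_real))) A = 0"
    by simp
  have "emeasure (density \<mu> (indicator (dual_hom - dual_hom_real))) (dual_hom - A)
      = (\<integral>\<^sup>+x. ennreal (f x) * (indicator (dual_hom - dual_hom_real) x * indicator (dual_hom - A) x) \<partial>\<tau>)"
  proof -
    have "dual_hom - A \<in> sets \<mu>"
      using A by (metis sets.compl_sets sets_tau space_tau)
    then have "emeasure (density \<mu> (indicator (dual_hom - dual_hom_real))) (dual_hom - A)
        = (\<integral>\<^sup>+x. indicator (dual_hom - dual_hom_real) x * indicator (dual_hom - A) x \<partial>\<mu>)"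
      by (intro emeasure_density) auto
    also have "\<dots> = (\<integral>\<^sup>+x. ennreal (f x) * (indicator (dual_hom - dual_hom_real) x * indicator (dual_hom - A) x) \<partial>\<tau>)"
      using \<open>dual_hom - A \<in> sets \<mu>\<close>
      by (subst density_f[symmetric], intro nn_integral_density) (auto simp: sets_tau)
    finally show ?thesis .
  qed
  also have "\<dots> = (\<integral>\<^sup>+x. 0 \<partial>\<tau>)"
    by (intro nn_integral_cong) (auto simp: A_def indicator_def ennreal_eq_0_iff)
  finally have mu_null: "emeasure (density \<mu> (indicator (dual_hom - dual_hom_real))) (dual_hom - A) = 0"
    by simp
  show ?thesis
    unfolding mutually_singular_def restrict_measure_def
    using A star_null mu_null by (intro bexI[of _ A] conjI) (auto simp: sets_tau space_mu)
qed

end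

theorem mainTheorem15:
  fixes \<phi> :: "'g::ab_group_add \<Rightarrow> quat" and \<mu> :: "('g \<Rightarrow> quat) measure"
  assumes "\<phi> \<in> P_star"
    and "radon_on dual_hom \<mu>"
    and "\<forall>g. \<phi> g = (\<integral>\<gamma>. \<gamma> g \<partial>\<mu>)"
    and "\<forall>\<nu>. radon_on dual_hom \<nu> \<and> (\<forall>g. \<phi> g = (\<integral>\<gamma>. \<gamma> g \<partial>\<nu>)) \<longrightarrow> \<nu> = \<mu>"
  shows "mutually_singular
           (restrict_measure (star_measure \<mu>) (dual_hom - dual_hom_real))
           (restrict_measure \<mu> (dual_hom - dual_hom_real))"
proof -
  \<comment> \<open>Positive definiteness of \<open>\<phi>\<close> only matters for the existence of \<open>\<mu>\<close>, which is assumed.\<close>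
  define \<tau> where "\<tau> = add_measure \<mu> (star_measure \<mu>)"
  have sets: "sets (star_measure \<mu>) = sets \<mu>"
    by (simp add: star_measure_def)
  have "radon_on dual_hom \<tau>"
    unfolding \<tau>_def using assms(2)
    by (intro radon_on_add_measure radon_star_measure sets compacts_in_sets_fun)
       (simp_all add: radon_on_def)
  then obtain f where "f \<in> borel_measurable \<tau>" "\<And>x. 0 \<le> f x" "density \<tau> (\<lambda>x. ennreal (f x)) = \<mu>"
    using finite_measure_real_density radon_on_finite_measure[OF assms(2)]
      absolutely_continuous_add_measure[OF sets]
    by (metis \<tau>_def radon_on_finite_measure sets_add_measure)
  then interpret dual_measure_density \<phi> \<mu> \<tau> f
    using assms(2-4) \<tau>_def by unfold_locales auto
  show ?thesis
    by (rule mutually_singular_nonreal)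
qed

end
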